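(* Let $\mu$ be a finite positive measure on $(\Omega,\mathcal B)$ with no atoms. Let $X=\operatorname{sp}\{1_A-1_B: A,B\in\mathcal B,\ \mu(A)=\mu(B)\}$, let $X_1$ be the norm closure of $X$ in $L_1(\mu)$ and $X_\infty$ the weak$^*$ ($\sigma(L_\infty,L_1)$) closure of $X$ in $L_\infty(\mu)$. Then $X_1=L^0_1$ and $X_\infty=L^0_\infty$, where $L^0_1=\{f\in L_1(\mu):\int f\,d\mu=0\}$ and $L^0_\infty=\{f\in L_\infty(\mu):\int f\,d\mu=0\}$.
   Context: An atom of $\mu$ is a set $A\in\mathcal B$ with $\mu(A)>0$ such that every measurable $B\subset A$ has $\mu(B)\in\{0,\mu(A)\}$. $\operatorname{sp}$ denotes linear span. *)

theory Defs
  imports "HOL-Analysis.Analysis"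
begin

definition atom :: "'a measure \<Rightarrow> 'a set \<Rightarrow> bool" where
  "atom M A \<longleftrightarrow> A \<in> sets M \<and> emeasure M A > 0 \<and>
     (\<forall>B\<in>sets M. B \<subseteq> A \<longrightarrow> emeasure M B = 0 \<or> emeasure M B = emeasure M A)"

definition Xsp :: "'a measure \<Rightarrow> ('a \<Rightarrow> real) set" where
  "Xsp M = {f. \<exists>(n::nat) c A B. (\<forall>i<n. A i \<in> sets M \<and> B i \<in> sets M \<and>
                                 emeasure M (A i) = emeasure M (B i)) \<and>
              f = (\<lambda>x. \<Sum>i<n. (c i :: real) * (indicator (A i) x - indicator (B i) x))}"

text \<open>L_1(M) and L_infinity(M), as sets of representatives (functions).\<close>
definition L1 :: "'a measure \<Rightarrow> ('a \<Rightarrow> real) set" where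
  "L1 M = {f. integrable M f}"

definition Linfty :: "'a measure \<Rightarrow> ('a \<Rightarrow> real) set" where
  "Linfty M = {f. f \<in> borel_measurable M \<and> (\<exists>C. AE x in M. \<bar>f x\<bar> \<le> C)}"

definition L1_closure :: "'a measure \<Rightarrow> ('a \<Rightarrow> real) set \<Rightarrow> ('a \<Rightarrow> real) set" where
  "L1_closure M S = {f \<in> L1 M. \<forall>e>0. \<exists>g\<in>S. g \<in> L1 M \<and> (\<integral>x. \<bar>f x - g x\<bar> \<partial>M) < e}"

text \<open>Closure in L_infinity for the weak* topology sigma(L_infinity, L_1), described by
  its basic neighbourhoods {g. \<forall>h\<in>H. |\<integral>(f - g) h| < e}, H finite subset of L_1.\<close>
definition weak_star_closure :: "'a measure \<Rightarrow> ('a \<Rightarrow> real) set \<Rightarrow> ('a \<Rightarrow> real) set" where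
  "weak_star_closure M S = {f \<in> Linfty M. \<forall>H e. finite H \<and> H \<subseteq> L1 M \<and> e > 0 \<longrightarrow>
      (\<exists>g\<in>S. g \<in> Linfty M \<and> (\<forall>h\<in>H. \<bar>\<integral>x. (f x - g x) * h x \<partial>M\<bar> < e))}"

end

theory Submission
  imports Defs
begin

(* Every element of X is bounded, integrable and has integral 0, so both closures lie in the
   zero-integral subspaces; the content is density.  For an integrable weight w \<ge> 0 we
   approximate f - (\<integral>f)/\<mu>(\<Omega>) by elements of X in the seminorm \<integral>|.| w d\<mu>:
   w = 1 gives the L_1 statement, and w = \<Sum>h\<in>H. |h| controls the finitely many
   functionals \<integral>(.) h of a basic weak* neighbourhood.  By linearity and density of simple
   functions it suffices to approximate 1_E - \<mu>(E)/\<mu>(\<Omega>).  As \<mu> has no atoms, it takes every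
   intermediate value on subsets (Sierpinski), so E contains E' with \<mu>(E') = j \<mu>(\<Omega>)/N and
   \<mu>(E - E') \<le> \<mu>(\<Omega>)/N, and E' and its complement split into j resp. N - j pieces of measure
   \<mu>(\<Omega>)/N.  Averaging the differences 1_P - 1_Q of pieces P \<subseteq> E', Q \<subseteq> \<Omega> - E' gives
   1_E' - j/N \<in> X, which is within 1_(E - E') + 1/N of 1_E - \<mu>(E)/\<mu>(\<Omega>); this error is small
   in the weighted seminorm by absolute continuity of the integral of w. *)

section \<open>Elementary properties of X\<close>

lemma XspI:
  fixes n :: nat
  assumes "\<And>i. i < n \<Longrightarrow> A i \<in> sets M \<and> B i \<in> sets M \<and> emeasure M (A i) = emeasure M (B i)"
  shows "(\<lambda>x. \<Sum>i<n. (c i :: real) * (indicator (A i) x - indicator (B i) x)) \<in> Xsp M"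
  unfolding Xsp_def mem_Collect_eq
  by (rule exI[of _ n], rule exI[of _ c], rule exI[of _ A], rule exI[of _ B]) (use assms in auto)

lemma XspE:
  assumes "f \<in> Xsp M"
  obtains n :: nat and A B c
  where "\<And>i. i < n \<Longrightarrow> A i \<in> sets M \<and> B i \<in> sets M \<and> emeasure M (A i) = emeasure M (B i)"
    and "f = (\<lambda>x. \<Sum>i<n. c i * (indicator (A i) x - indicator (B i) x))"
proof -
  obtain n :: nat and c A B
    where "\<forall>i<n. A i \<in> sets M \<and> B i \<in> sets M \<and> emeasure M (A i) = emeasure M (B i)"
      and "f = (\<lambda>x. \<Sum>i<n. c i * (indicator (A i) x - indicator (B i) x))"
    using assms unfolding Xsp_def by blast
  then show thesis
    by (intro that) auto
qed

lemma Xsp_zero: "(\<lambda>x. 0) \<in> Xsp M"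
  using XspI[of 0 "\<lambda>_. {}" M "\<lambda>_. {}" "\<lambda>_. 0"] by simp

lemma indicator_diff_in_Xsp:
  assumes "A \<in> sets M" "B \<in> sets M" "emeasure M A = emeasure M B"
  shows "(\<lambda>x. indicator A x - indicator B x :: real) \<in> Xsp M"
  using XspI[of 1 "\<lambda>_. A" M "\<lambda>_. B" "\<lambda>_. 1"] assms by simp

lemma Xsp_cmult:
  assumes "f \<in> Xsp M"
  shows "(\<lambda>x. r * f x) \<in> Xsp M"
  using assms
proof (rule XspE)
  fix n :: nat and A B c
  assume AB: "\<And>i. i < n \<Longrightarrow> A i \<in> sets M \<and> B i \<in> sets M \<and> emeasure M (A i) = emeasure M (B i)"
    and f: "f = (\<lambda>x. \<Sum>i<n. c i * (indicator (A i) x - indicator (B i) x))"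
  have "(\<lambda>x. \<Sum>i<n. (r * c i) * (indicator (A i) x - indicator (B i) x)) \<in> Xsp M"
    using AB by (rule XspI)
  then show ?thesis
    unfolding f by (simp add: sum_distrib_left mult.assoc)
qed

lemma Xsp_add:
  assumes "f \<in> Xsp M" "g \<in> Xsp M"
  shows "(\<lambda>x. f x + g x) \<in> Xsp M"
proof -
  obtain n :: nat and A B c
    where AB: "\<And>i. i < n \<Longrightarrow> A i \<in> sets M \<and> B i \<in> sets M \<and> emeasure M (A i) = emeasure M (B i)"
      and f: "f = (\<lambda>x. \<Sum>i<n. c i * (indicator (A i) x - indicator (B i) x))"
    using assms(1) by (elim XspE) blast
  obtain n' :: nat and A' B' c'
    where AB': "\<And>i. i < n' \<Longrightarrow> A' i \<in> sets M \<and> B' i \<in> sets M \<and> emeasure M (A' i) = emeasure M (B' i)"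
      and g: "g = (\<lambda>x. \<Sum>i<n'. c' i * (indicator (A' i) x - indicator (B' i) x))"
    using assms(2) by (elim XspE) blast
  define C where "C i = (if i < n then c i else c' (i - n))" for i
  define A'' where "A'' i = (if i < n then A i else A' (i - n))" for i
  define B'' where "B'' i = (if i < n then B i else B' (i - n))" for i
  have "(\<lambda>x. \<Sum>i<n + n'. C i * (indicator (A'' i) x - indicator (B'' i) x)) \<in> Xsp M"
    using AB AB' by (intro XspI) (auto simp: A''_def B''_def)
  moreover have "(\<Sum>i<n + n'. F i) = (\<Sum>i<n. F i) + (\<Sum>i<n'. F (n + i))" for F :: "nat \<Rightarrow> real"
    by (induction n') (simp_all add: ac_simps)
  ultimately show ?thesis
    unfolding f g by (simp add: C_def A''_def B''_def)
qed

lemma Xsp_sum: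
  assumes "finite I" "\<And>i. i \<in> I \<Longrightarrow> F i \<in> Xsp M"
  shows "(\<lambda>x. \<Sum>i\<in>I. F i x) \<in> Xsp M"
  using assms by (induction I rule: finite_induct) (auto intro: Xsp_zero Xsp_add)

lemma borel_measurable_Xsp:
  assumes "f \<in> Xsp M"
  shows "f \<in> borel_measurable M"
  using assms by (rule XspE) (auto intro!: borel_measurable_sum borel_measurable_times borel_measurable_diff borel_measurable_indicator)

context finite_measure
begin

lemma
  assumes "f \<in> Xsp M"
  shows integrable_Xsp: "integrable M f"
    and integral_Xsp: "(\<integral>x. f x \<partial>M) = 0"
    and bounded_Xsp: "\<exists>C. \<forall>x. \<bar>f x\<bar> \<le> C"
proof -
  obtain n :: nat and A B c
    where AB: "\<And>i. i < n \<Longrightarrow> A i \<in> sets M \<and> B i \<in> sets M \<and> emeasure M (A i) = emeasure M (B i)"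
      and f: "f = (\<lambda>x. \<Sum>i<n. c i * (indicator (A i) x - indicator (B i) x))"
    using assms by (elim XspE) blast
  have integrable: "integrable M (\<lambda>x. c i * (indicator (A i) x - indicator (B i) x))" if "i < n" for i
    using AB[OF that] by (auto simp: emeasure_finite less_top[symmetric])
  then show "integrable M f"
    unfolding f by auto
  have "(\<integral>x. c i * (indicator (A i) x - indicator (B i) x) \<partial>M) = 0" if "i < n" for i
    using AB[OF that] by (simp add: emeasure_finite less_top[symmetric] measure_def)
  then show "(\<integral>x. f x \<partial>M) = 0"
    unfolding f using integrable
    by (subst Bochner_Integration.integral_sum) (auto simp del: integral_mult_right_zero integral_mult_right)
  have "\<bar>f x\<bar> \<le> (\<Sum>i<n. \<bar>c i\<bar>)" for x
    unfolding f by (rule order_trans[OF sum_abs sum_mono]) (auto simp: abs_mult indicator_def)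
  then show "\<exists>C. \<forall>x. \<bar>f x\<bar> \<le> C"
    by blast
qed

lemma Xsp_subset_Linfty: "Xsp M \<subseteq> Linfty M"
  using integrable_Xsp bounded_Xsp unfolding Linfty_def by blast

end

section \<open>Nonatomic measures\<close>

lemma exists_le_twice_member:
  fixes S :: "real set"
  assumes "S \<noteq> {}" "bdd_above S" "\<And>x. x \<in> S \<Longrightarrow> 0 \<le> x"
  shows "\<exists>x\<in>S. \<forall>y\<in>S. y \<le> 2 * x"
proof -
  have le_Sup: "y \<le> Sup S" if "y \<in> S" for y
    using cSup_upper[OF that assms(2)] .
  obtain x0 where "x0 \<in> S"
    using assms(1) by blast
  show ?thesis
  proof (cases "Sup S = 0")
    case True
    have "y \<le> 2 * x0" if "y \<in> S" for y
      using le_Sup[OF that] assms(3)[OF \<open>x0 \<in> S\<close>] True by linarith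
    with \<open>x0 \<in> S\<close> show ?thesis by blast
  next
    case False
    then have "Sup S / 2 < Sup S"
      using le_Sup[OF \<open>x0 \<in> S\<close>] assms(3)[OF \<open>x0 \<in> S\<close>] by linarith
    then obtain x where "x \<in> S" "Sup S / 2 < x"
      using less_cSup_iff[OF assms(1,2)] by blast
    moreover have "y \<le> 2 * x" if "y \<in> S" for y
      using le_Sup[OF that] calculation(2) by linarith
    ultimately show ?thesis by blast
  qed
qed

lemma (in finite_measure) greedy_subset_sequence:
  assumes A: "A \<in> sets M" and s: "0 \<le> s"
  obtains Bs where "incseq Bs" "\<And>n. Bs n \<in> sets M" "\<And>n. Bs n \<subseteq> A" "\<And>n. measure M (Bs n) \<le> s"
    "\<And>n D. D \<in> sets M \<Longrightarrow> D \<subseteq> A - Bs n \<Longrightarrow> measure M (Bs n) + measure M D \<le> s \<Longrightarrow>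
      measure M D \<le> 2 * (measure M (Bs (Suc n)) - measure M (Bs n))"
proof -
  define admissible where "admissible B \<longleftrightarrow> B \<in> sets M \<and> B \<subseteq> A \<and> measure M B \<le> s" for B
  define extensions where
    "extensions B = {C \<in> sets M. C \<subseteq> A - B \<and> measure M B + measure M C \<le> s}" for B
  have "\<exists>C\<in>extensions B. \<forall>D\<in>extensions B. measure M D \<le> 2 * measure M C" if "admissible B" for B
  proof -
    have "{} \<in> extensions B"
      using that by (simp add: admissible_def extensions_def)
    moreover have "bdd_above (measure M ` extensions B)"
      by (intro bdd_aboveI[of _ "measure M (space M)"]) (auto simp: bounded_measure)
    ultimately have "\<exists>x\<in>measure M ` extensions B. \<forall>y\<in>measure M ` extensions B. y \<le> 2 * x"
      by (intro exists_le_twice_member) auto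
    then show ?thesis
      by auto
  qed
  then obtain grow where grow: "\<And>B. admissible B \<Longrightarrow> grow B \<in> extensions B"
    and grow_large: "\<And>B D. admissible B \<Longrightarrow> D \<in> extensions B \<Longrightarrow> measure M D \<le> 2 * measure M (grow B)"
    by metis
  define Bs where "Bs n = ((\<lambda>B. B \<union> grow B) ^^ n) {}" for n
  have Bs_Suc: "Bs (Suc n) = Bs n \<union> grow (Bs n)" for n
    by (simp add: Bs_def)
  have measure_Suc: "measure M (Bs (Suc n)) = measure M (Bs n) + measure M (grow (Bs n))"
    if "admissible (Bs n)" for n
    using that grow[OF that] unfolding Bs_Suc
    by (intro finite_measure_Union) (auto simp: admissible_def extensions_def)
  have admissible: "admissible (Bs n)" for n
  proof (induction n)
    case (Suc n)
    then show ?case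
      using grow[OF Suc] measure_Suc[OF Suc] by (auto simp: Bs_Suc admissible_def extensions_def)
  qed (use s in \<open>simp add: Bs_def admissible_def\<close>)
  have "incseq Bs"
    by (rule incseq_SucI) (simp add: Bs_Suc)
  moreover have "measure M D \<le> 2 * (measure M (Bs (Suc n)) - measure M (Bs n))"
    if "D \<in> sets M" "D \<subseteq> A - Bs n" "measure M (Bs n) + measure M D \<le> s" for n D
    using that grow_large[OF admissible, of D n] measure_Suc[OF admissible] by (simp add: extensions_def)
  ultimately show ?thesis
    using admissible that by (simp add: admissible_def)
qed

lemma (in finite_measure) exists_maximal_subset_measure_le:
  assumes A: "A \<in> sets M" and s: "0 \<le> s"
  shows "\<exists>U\<in>sets M. U \<subseteq> A \<and> measure M U \<le> s \<and>
    (\<forall>D\<in>sets M. D \<subseteq> A - U \<longrightarrow> measure M U + measure M D \<le> s \<longrightarrow> measure M D = 0)"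
proof -
  obtain Bs where "incseq Bs" and Bs: "\<And>n. Bs n \<in> sets M" "\<And>n. Bs n \<subseteq> A" "\<And>n. measure M (Bs n) \<le> s"
    and greedy: "\<And>n D. D \<in> sets M \<Longrightarrow> D \<subseteq> A - Bs n \<Longrightarrow> measure M (Bs n) + measure M D \<le> s \<Longrightarrow>
      measure M D \<le> 2 * (measure M (Bs (Suc n)) - measure M (Bs n))"
    using greedy_subset_sequence[OF A s] by blast
  define U where "U = (\<Union>n. Bs n)"
  have U: "U \<in> sets M" "U \<subseteq> A"
    using Bs by (auto simp: U_def)
  have lim: "(\<lambda>n. measure M (Bs n)) \<longlonglongrightarrow> measure M U"
    unfolding U_def using Bs(1) \<open>incseq Bs\<close> by (intro finite_Lim_measure_incseq) auto
  then have gain_lim: "(\<lambda>n. measure M (Bs (Suc n)) - measure M (Bs n)) \<longlonglongrightarrow> 0"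
    using tendsto_diff[OF LIMSEQ_Suc[OF lim] lim] by simp
  have "measure M D = 0" if D: "D \<in> sets M" "D \<subseteq> A - U" "measure M U + measure M D \<le> s" for D
  proof -
    have "measure M D / 2 \<le> measure M (Bs (Suc n)) - measure M (Bs n)" for n
    proof -
      have "measure M (Bs n) \<le> measure M U"
        using U by (intro finite_measure_mono) (auto simp: U_def)
      moreover have "D \<subseteq> A - Bs n"
        using D(2) by (auto simp: U_def)
      ultimately show ?thesis
        using greedy[of D n] D(1,3) by simp
    qed
    then have "measure M D / 2 \<le> 0"
      using gain_lim by (intro LIMSEQ_le_const) auto
    then show ?thesis
      using measure_nonneg[of M D] by linarith
  qed
  moreover have "measure M U \<le> s"
    using lim Bs(3) by (intro LIMSEQ_le_const2) auto
  ultimately show ?thesis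
    using U by blast
qed

lemma (in finite_measure) measure_UN_equal_disjoint:
  assumes "\<And>i. i < k \<Longrightarrow> P i \<in> sets M \<and> measure M (P i) = c" "disjoint_family_on P {..<k}"
  shows "measure M (\<Union>i<k. P i) = real k * c"
proof -
  have "measure M (\<Union>i<k. P i) = (\<Sum>i<k. measure M (P i))"
    using assms by (intro finite_measure_finite_Union) auto
  then show ?thesis
    using assms(1) by simp
qed

locale nonatomic_finite_measure = finite_measure +
  assumes no_atom: "\<not> atom M A"
begin

lemma exists_subset_measure_le_half:
  assumes "A \<in> sets M" "0 < measure M A"
  shows "\<exists>B\<in>sets M. B \<subseteq> A \<and> 0 < measure M B \<and> measure M B \<le> measure M A / 2"
proof -
  obtain C where C: "C \<in> sets M" "C \<subseteq> A" "measure M C \<noteq> 0" "measure M C \<noteq> measure M A"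
    using no_atom[of A] assms by (auto simp: atom_def emeasure_eq_measure)
  have pos: "0 < measure M C"
    using C(3) measure_nonneg[of M C] by linarith
  show ?thesis
  proof (cases "measure M C \<le> measure M A / 2")
    case True
    with C pos show ?thesis by blast
  next
    case False
    have "measure M C \<le> measure M A"
      using C assms(1) by (intro finite_measure_mono)
    then have "0 < measure M (A - C)" "measure M (A - C) \<le> measure M A / 2"
      using C(1,2,4) False assms(1) by (auto simp: finite_measure_Diff)
    with C assms(1) show ?thesis
      by (intro bexI[of _ "A - C"]) auto
  qed
qed

lemma exists_subset_small_measure:
  assumes "A \<in> sets M" "0 < measure M A" "0 < e"
  shows "\<exists>B\<in>sets M. B \<subseteq> A \<and> 0 < measure M B \<and> measure M B < e"
proof -
  have halving: "\<exists>B\<in>sets M. B \<subseteq> A \<and> 0 < measure M B \<and> measure M B \<le> measure M A / 2 ^ n" for n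
  proof (induction n)
    case (Suc n)
    then obtain B where B: "B \<in> sets M" "B \<subseteq> A" "0 < measure M B" "measure M B \<le> measure M A / 2 ^ n"
      by blast
    then obtain C where C: "C \<in> sets M" "C \<subseteq> B" "0 < measure M C" "measure M C \<le> measure M B / 2"
      using exists_subset_measure_le_half[of B] by blast
    have "measure M B / 2 \<le> measure M A / 2 ^ Suc n"
      using divide_right_mono[OF B(4), of 2] by (simp add: mult.commute)
    then have "measure M C \<le> measure M A / 2 ^ Suc n"
      using C(4) by linarith
    with B C show ?case
      by blast
  qed (use assms in auto)
  obtain n where "measure M A / e < 2 ^ n"
    using real_arch_pow[of 2] by auto
  then have "measure M A / 2 ^ n < e"
    using assms(3) by (simp add: field_simps)
  moreover obtain B where "B \<in> sets M" "B \<subseteq> A" "0 < measure M B" "measure M B \<le> measure M A / 2 ^ n"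
    using halving by blast
  ultimately show ?thesis
    by (intro bexI[of _ B]) auto
qed

lemma exists_subset_measure_eq:
  assumes A: "A \<in> sets M" and s: "0 \<le> s" "s \<le> measure M A"
  shows "\<exists>B\<in>sets M. B \<subseteq> A \<and> measure M B = s"
proof -
  obtain U where U: "U \<in> sets M" "U \<subseteq> A" "measure M U \<le> s"
    and maximal: "\<And>D. D \<in> sets M \<Longrightarrow> D \<subseteq> A - U \<Longrightarrow> measure M U + measure M D \<le> s \<Longrightarrow> measure M D = 0"
    using exists_maximal_subset_measure_le[OF A s(1)] by blast
  have "\<not> measure M U < s"
  proof
    assume "measure M U < s"
    then have "0 < measure M (A - U)"
      using U A s by (simp add: finite_measure_Diff)
    then obtain D where "D \<in> sets M" "D \<subseteq> A - U" "0 < measure M D" "measure M D < s - measure M U"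
      using exists_subset_small_measure[of "A - U" "s - measure M U"] U A \<open>measure M U < s\<close> by auto
    with maximal[of D] show False
      by simp
  qed
  with U show ?thesis
    by (intro bexI[of _ U]) auto
qed

lemma exists_disjoint_subsets_measure_eq:
  assumes "A \<in> sets M" "0 \<le> c" "real k * c \<le> measure M A"
  shows "\<exists>P. (\<forall>i<k. P i \<in> sets M \<and> P i \<subseteq> A \<and> measure M (P i) = c) \<and> disjoint_family_on P {..<k}"
  using assms(3)
proof (induction k)
  case (Suc k)
  then have "real k * c \<le> measure M A"
    using assms(2) by (simp add: algebra_simps)
  then obtain P where P: "\<forall>i<k. P i \<in> sets M \<and> P i \<subseteq> A \<and> measure M (P i) = c" "disjoint_family_on P {..<k}"
    using Suc.IH by blast
  define R where "R = A - (\<Union>i<k. P i)"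
  have "measure M R = measure M A - measure M (\<Union>i<k. P i)"
    using P(1) assms(1) unfolding R_def by (intro finite_measure_Diff) auto
  then have "measure M R = measure M A - real k * c"
    using P measure_UN_equal_disjoint[of k P c] by simp
  then obtain B where B: "B \<in> sets M" "B \<subseteq> R" "measure M B = c"
    using exists_subset_measure_eq[of R c] assms(1,2) Suc.prems P by (auto simp: R_def algebra_simps)
  have "disjoint_family_on (P(k := B)) {..<Suc k}"
    using P(2) B(2) by (auto simp: disjoint_family_on_def R_def)
  moreover have "\<forall>i<Suc k. (P(k := B)) i \<in> sets M \<and> (P(k := B)) i \<subseteq> A \<and> measure M ((P(k := B)) i) = c"
    using P(1) B by (auto simp: R_def)
  ultimately show ?case
    by blast
qed (auto simp: disjoint_family_on_def)

lemma exists_partition_measure_eq: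
  assumes "A \<in> sets M" "0 < k" "measure M A = real k * c"
  shows "\<exists>P. (\<forall>i<k. P i \<in> sets M \<and> measure M (P i) = c) \<and> disjoint_family_on P {..<k} \<and> (\<Union>i<k. P i) = A"
proof -
  obtain k' where k: "k = Suc k'"
    using assms(2) gr0_implies_Suc by blast
  have "0 \<le> c"
    using assms(2,3) measure_nonneg[of M A] by (simp add: zero_le_mult_iff)
  then obtain P where P: "\<forall>i<k'. P i \<in> sets M \<and> P i \<subseteq> A \<and> measure M (P i) = c" "disjoint_family_on P {..<k'}"
    using exists_disjoint_subsets_measure_eq[of A c k'] assms k by (auto simp: algebra_simps)
  define R where "R = A - (\<Union>i<k'. P i)"
  have "R \<in> sets M"
    unfolding R_def using P(1) assms(1) by (intro sets.Diff sets.finite_UN) auto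
  have "measure M R = measure M A - measure M (\<Union>i<k'. P i)"
    using P(1) assms(1) unfolding R_def by (intro finite_measure_Diff) auto
  then have "measure M R = c"
    using P assms(3) measure_UN_equal_disjoint[of k' P c] k by (simp add: algebra_simps)
  moreover have "disjoint_family_on (P(k' := R)) {..<k}"
    using P(2) k by (auto simp: disjoint_family_on_def R_def)
  moreover have "(\<Union>i<k. (P(k' := R)) i) = A"
    using P(1) k by (auto simp: R_def lessThan_Suc)
  ultimately show ?thesis
    using P \<open>R \<in> sets M\<close> by (intro exI[of _ "P(k' := R)"]) (auto simp: k)
qed

lemma exists_Xsp_eq_indicator_minus_const:
  assumes E: "E \<in> sets M" and "j < N" and fits: "real j * (measure M (space M) / N) \<le> measure M E"
  shows "\<exists>E'\<in>sets M. E' \<subseteq> E \<and> measure M E' = real j * (measure M (space M) / N) \<and>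
    (\<exists>g\<in>Xsp M. \<forall>x\<in>space M. g x = indicator E' x - real j / N)"
proof -
  define c where "c = measure M (space M) / N"
  have "0 \<le> c"
    by (simp add: c_def)
  obtain P where P: "\<forall>i<j. P i \<in> sets M \<and> P i \<subseteq> E \<and> measure M (P i) = c" "disjoint_family_on P {..<j}"
    using exists_disjoint_subsets_measure_eq[OF E \<open>0 \<le> c\<close> fits[folded c_def]] by blast
  define E' where "E' = (\<Union>i<j. P i)"
  have E': "E' \<in> sets M" "E' \<subseteq> E" "measure M E' = real j * c"
    using P measure_UN_equal_disjoint[of j P c] by (auto simp: E'_def)
  have "measure M (space M - E') = real (N - j) * c"
    using E' \<open>j < N\<close> by (simp add: finite_measure_compl of_nat_diff c_def field_simps)
  then obtain Q where Q: "\<forall>l<N - j. Q l \<in> sets M \<and> measure M (Q l) = c"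
    "disjoint_family_on Q {..<N - j}" "(\<Union>l<N - j. Q l) = space M - E'"
    using exists_partition_measure_eq[of "space M - E'" "N - j" c] E'(1) \<open>j < N\<close> by auto
  define g where "g x = (1 / N) * (\<Sum>i<j. \<Sum>l<N - j. indicator (P i) x - indicator (Q l) x)" for x
  have "g \<in> Xsp M"
    unfolding g_def using P(1) Q(1)
    by (intro Xsp_cmult Xsp_sum indicator_diff_in_Xsp) (auto simp: emeasure_eq_measure)
  moreover have "g x = indicator E' x - real j / N" if "x \<in> space M" for x
  proof -
    have "(\<Sum>i<j. indicator (P i) x) = (indicator E' x :: real)"
      unfolding E'_def by (rule indicator_UN_disjoint[symmetric]) (use P(2) in auto)
    moreover have "(\<Sum>l<N - j. indicator (Q l) x) = (indicator (space M - E') x :: real)"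
      unfolding Q(3)[symmetric] by (rule indicator_UN_disjoint[symmetric]) (use Q(2) in auto)
    ultimately have "(\<Sum>i<j. \<Sum>l<N - j. indicator (P i) x - indicator (Q l) x)
        = real (N - j) * indicator E' x - real j * indicator (space M - E') x"
      by (simp add: sum_subtractf sum.swap[of _ "{..<j}"] flip: sum_distrib_left)
    also have "\<dots> = real N * indicator E' x - real j"
      using that \<open>j < N\<close> by (simp add: indicator_def of_nat_diff)
    finally show ?thesis
      using \<open>j < N\<close> by (simp add: g_def field_simps)
  qed
  ultimately show ?thesis
    using E' by (auto simp: c_def)
qed

end

section \<open>Approximation in weighted L_1\<close>

(* u lies in the closure of X for the seminorm u \<mapsto> \<integral>|u| w d\<mu>; taking the integral in ennreal
   avoids integrability side conditions. *)
definition Xsp_approximable :: "'a measure \<Rightarrow> ('a \<Rightarrow> real) \<Rightarrow> ('a \<Rightarrow> real) \<Rightarrow> bool" where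
  "Xsp_approximable M w u \<longleftrightarrow> u \<in> borel_measurable M \<and>
     (\<forall>e>0. \<exists>g\<in>Xsp M. (\<integral>\<^sup>+x. ennreal (\<bar>u x - g x\<bar> * w x) \<partial>M) < ennreal e)"

lemma nn_integral_weighted_abs_le_add:
  assumes [measurable]: "u \<in> borel_measurable M" "v \<in> borel_measurable M" "w \<in> borel_measurable M"
    and le: "\<And>x. x \<in> space M \<Longrightarrow> \<bar>t x\<bar> \<le> \<bar>u x\<bar> + \<bar>v x\<bar>"
  shows "(\<integral>\<^sup>+x. ennreal (\<bar>t x\<bar> * w x) \<partial>M)
    \<le> (\<integral>\<^sup>+x. ennreal (\<bar>u x\<bar> * w x) \<partial>M) + (\<integral>\<^sup>+x. ennreal (\<bar>v x\<bar> * w x) \<partial>M)"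
proof -
  have "ennreal (\<bar>t x\<bar> * w x) \<le> ennreal (\<bar>u x\<bar> * w x) + ennreal (\<bar>v x\<bar> * w x)" if "x \<in> space M" for x
  proof -
    have "ennreal \<bar>t x\<bar> \<le> ennreal \<bar>u x\<bar> + ennreal \<bar>v x\<bar>"
      using ennreal_leI[OF le[OF that]] by simp
    from mult_right_mono[OF this, of "ennreal (w x)"] show ?thesis
      by (simp add: ennreal_mult' distrib_right)
  qed
  then have "(\<integral>\<^sup>+x. ennreal (\<bar>t x\<bar> * w x) \<partial>M)
      \<le> (\<integral>\<^sup>+x. ennreal (\<bar>u x\<bar> * w x) + ennreal (\<bar>v x\<bar> * w x) \<partial>M)"
    by (intro nn_integral_mono)
  also have "\<dots> = (\<integral>\<^sup>+x. ennreal (\<bar>u x\<bar> * w x) \<partial>M) + (\<integral>\<^sup>+x. ennreal (\<bar>v x\<bar> * w x) \<partial>M)"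
    by (rule nn_integral_add) auto
  finally show ?thesis .
qed

lemma Xsp_approximable_add:
  assumes w: "w \<in> borel_measurable M"
    and u: "Xsp_approximable M w u" and v: "Xsp_approximable M w v"
  shows "Xsp_approximable M w (\<lambda>x. u x + v x)"
proof -
  have [measurable]: "u \<in> borel_measurable M" "v \<in> borel_measurable M"
    using u v by (auto simp: Xsp_approximable_def)
  have "\<exists>g\<in>Xsp M. (\<integral>\<^sup>+x. ennreal (\<bar>u x + v x - g x\<bar> * w x) \<partial>M) < ennreal e" if "e > 0" for e
  proof -
    obtain g where g: "g \<in> Xsp M" "(\<integral>\<^sup>+x. ennreal (\<bar>u x - g x\<bar> * w x) \<partial>M) < ennreal (e / 2)"
      using u \<open>e > 0\<close> unfolding Xsp_approximable_def by (meson half_gt_zero)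
    obtain h where h: "h \<in> Xsp M" "(\<integral>\<^sup>+x. ennreal (\<bar>v x - h x\<bar> * w x) \<partial>M) < ennreal (e / 2)"
      using v \<open>e > 0\<close> unfolding Xsp_approximable_def by (meson half_gt_zero)
    have [measurable]: "g \<in> borel_measurable M" "h \<in> borel_measurable M"
      using g(1) h(1) by (auto intro: borel_measurable_Xsp)
    have "(\<integral>\<^sup>+x. ennreal (\<bar>u x + v x - (g x + h x)\<bar> * w x) \<partial>M)
        \<le> (\<integral>\<^sup>+x. ennreal (\<bar>u x - g x\<bar> * w x) \<partial>M) + (\<integral>\<^sup>+x. ennreal (\<bar>v x - h x\<bar> * w x) \<partial>M)"
      using w by (intro nn_integral_weighted_abs_le_add) auto
    also have "\<dots> < ennreal e"
      using add_mono_ennreal[OF g(2) h(2)] by simp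
    finally show ?thesis
      using Xsp_add[OF g(1) h(1)] by (intro bexI[of _ "\<lambda>x. g x + h x"]) auto
  qed
  then show ?thesis
    by (simp add: Xsp_approximable_def)
qed

lemma Xsp_approximable_zero: "Xsp_approximable M w (\<lambda>x. 0)"
  unfolding Xsp_approximable_def using Xsp_zero by (auto intro!: bexI[of _ "\<lambda>x. 0"])

lemma Xsp_approximable_cmult:
  assumes [measurable]: "w \<in> borel_measurable M" and u: "Xsp_approximable M w u"
  shows "Xsp_approximable M w (\<lambda>x. r * u x)"
proof -
  have [measurable]: "u \<in> borel_measurable M"
    using u by (simp add: Xsp_approximable_def)
  have "\<exists>g\<in>Xsp M. (\<integral>\<^sup>+x. ennreal (\<bar>r * u x - g x\<bar> * w x) \<partial>M) < ennreal e" if "e > 0" for e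
  proof -
    obtain g where g: "g \<in> Xsp M" "(\<integral>\<^sup>+x. ennreal (\<bar>u x - g x\<bar> * w x) \<partial>M) < ennreal (e / (\<bar>r\<bar> + 1))"
      using u \<open>e > 0\<close> unfolding Xsp_approximable_def by (meson divide_pos_pos abs_ge_zero add_nonneg_pos zero_less_one)
    have [measurable]: "g \<in> borel_measurable M"
      using g(1) by (rule borel_measurable_Xsp)
    have "(\<integral>\<^sup>+x. ennreal (\<bar>r * u x - r * g x\<bar> * w x) \<partial>M)
        = ennreal \<bar>r\<bar> * (\<integral>\<^sup>+x. ennreal (\<bar>u x - g x\<bar> * w x) \<partial>M)"
      by (simp add: abs_mult mult.assoc ennreal_mult' nn_integral_cmult flip: right_diff_distrib)
    also have "\<dots> \<le> ennreal \<bar>r\<bar> * ennreal (e / (\<bar>r\<bar> + 1))"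
      using g(2) by (intro mult_left_mono) auto
    also have "\<dots> < ennreal e"
      using \<open>e > 0\<close> by (simp add: ennreal_mult'[symmetric] field_simps ennreal_lessI)
    finally show ?thesis
      using Xsp_cmult[OF g(1), of r] by (intro bexI[of _ "\<lambda>x. r * g x"]) auto
  qed
  then show ?thesis
    by (simp add: Xsp_approximable_def)
qed

lemma Xsp_approximable_sum:
  assumes "w \<in> borel_measurable M" "finite I" "\<And>i. i \<in> I \<Longrightarrow> Xsp_approximable M w (F i)"
  shows "Xsp_approximable M w (\<lambda>x. \<Sum>i\<in>I. F i x)"
  using assms(2,3)
  by (induction I rule: finite_induct) (auto intro: Xsp_approximable_zero Xsp_approximable_add[OF assms(1)])

lemma Xsp_approximable_cong:
  assumes "Xsp_approximable M w u" "\<And>x. x \<in> space M \<Longrightarrow> u x = v x"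
  shows "Xsp_approximable M w v"
proof -
  have "v \<in> borel_measurable M"
    using assms measurable_cong[of M u v] by (auto simp: Xsp_approximable_def)
  moreover have "(\<integral>\<^sup>+x. ennreal (\<bar>u x - g x\<bar> * w x) \<partial>M) = (\<integral>\<^sup>+x. ennreal (\<bar>v x - g x\<bar> * w x) \<partial>M)" for g
    using assms(2) by (intro nn_integral_cong) auto
  ultimately show ?thesis
    using assms(1) by (simp add: Xsp_approximable_def)
qed

lemma Xsp_approximable_limit:
  assumes [measurable]: "w \<in> borel_measurable M" "u \<in> borel_measurable M"
    and approx: "\<And>e. e > 0 \<Longrightarrow> \<exists>v. Xsp_approximable M w v \<and> (\<integral>\<^sup>+x. ennreal (\<bar>u x - v x\<bar> * w x) \<partial>M) < ennreal e"
  shows "Xsp_approximable M w u"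
proof -
  have "\<exists>g\<in>Xsp M. (\<integral>\<^sup>+x. ennreal (\<bar>u x - g x\<bar> * w x) \<partial>M) < ennreal e" if "e > 0" for e
  proof -
    obtain v where v: "Xsp_approximable M w v" "(\<integral>\<^sup>+x. ennreal (\<bar>u x - v x\<bar> * w x) \<partial>M) < ennreal (e / 2)"
      using approx \<open>e > 0\<close> by (meson half_gt_zero)
    then have [measurable]: "v \<in> borel_measurable M"
      by (simp add: Xsp_approximable_def)
    obtain g where g: "g \<in> Xsp M" "(\<integral>\<^sup>+x. ennreal (\<bar>v x - g x\<bar> * w x) \<partial>M) < ennreal (e / 2)"
      using v(1) \<open>e > 0\<close> unfolding Xsp_approximable_def by (meson half_gt_zero)
    have [measurable]: "g \<in> borel_measurable M"
      using g(1) by (rule borel_measurable_Xsp)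
    have "(\<integral>\<^sup>+x. ennreal (\<bar>u x - g x\<bar> * w x) \<partial>M)
        \<le> (\<integral>\<^sup>+x. ennreal (\<bar>u x - v x\<bar> * w x) \<partial>M) + (\<integral>\<^sup>+x. ennreal (\<bar>v x - g x\<bar> * w x) \<partial>M)"
      by (intro nn_integral_weighted_abs_le_add) auto
    also have "\<dots> < ennreal e"
      using add_mono_ennreal[OF v(2) g(2)] by simp
    finally show ?thesis
      using g(1) by blast
  qed
  then show ?thesis
    by (simp add: Xsp_approximable_def)
qed

lemma nn_integral_truncation_tail_tendsto_0:
  assumes w: "integrable M w" "\<And>x. 0 \<le> w x"
  shows "(\<lambda>n. \<integral>\<^sup>+x. ennreal (w x - min (w x) (real n)) \<partial>M) \<longlonglongrightarrow> 0"
proof -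
  have [measurable]: "w \<in> borel_measurable M"
    using w(1) by auto
  have "(\<lambda>n. \<integral>\<^sup>+x. ennreal (w x - min (w x) (real n)) \<partial>M) \<longlonglongrightarrow> (\<integral>\<^sup>+x. ennreal 0 \<partial>M)"
  proof (rule nn_integral_dominated_convergence[where w="\<lambda>x. ennreal (w x)"])
    show "(\<integral>\<^sup>+x. ennreal (w x) \<partial>M) < \<infinity>"
      using w(1) by (simp add: nn_integral_eq_integral w(2))
    show "AE x in M. (\<lambda>n. ennreal (w x - min (w x) (real n))) \<longlonglongrightarrow> ennreal 0"
    proof (intro AE_I2 tendsto_ennrealI)
      fix x
      have "w x - min (w x) (real n) = 0" if "nat \<lceil>w x\<rceil> \<le> n" for n
        using real_nat_ceiling_ge[of "w x"] of_nat_mono[OF that] by simp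
      then have "eventually (\<lambda>n. w x - min (w x) (real n) = 0) sequentially"
        using eventually_ge_at_top[of "nat \<lceil>w x\<rceil>"] by (auto elim: eventually_mono)
      then show "(\<lambda>n. w x - min (w x) (real n)) \<longlonglongrightarrow> 0"
        by (rule tendsto_eventually)
    qed
  qed (auto simp: w(2))
  then show ?thesis
    by simp
qed

lemma (in finite_measure) nn_integral_small_on_small_sets:
  assumes w: "integrable M w" "\<And>x. 0 \<le> w x" and "0 < e"
  shows "\<exists>d>0. \<forall>D\<in>sets M. measure M D < d \<longrightarrow> (\<integral>\<^sup>+x. ennreal (indicator D x * w x) \<partial>M) < ennreal e"
proof -
  have [measurable]: "w \<in> borel_measurable M"
    using w(1) by auto
  define tail where "tail n x = w x - min (w x) (real n)" for n x
  have "(\<lambda>n. \<integral>\<^sup>+x. ennreal (tail n x) \<partial>M) \<longlonglongrightarrow> 0"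
    unfolding tail_def using w by (rule nn_integral_truncation_tail_tendsto_0)
  then have "eventually (\<lambda>n. (\<integral>\<^sup>+x. ennreal (tail n x) \<partial>M) < ennreal (e / 2)) sequentially"
    using \<open>0 < e\<close> by (intro order_tendstoD(2)) auto
  then obtain n where n: "(\<integral>\<^sup>+x. ennreal (tail n x) \<partial>M) < ennreal (e / 2)"
    unfolding eventually_sequentially by blast
  define d where "d = e / (2 * (real n + 1))"
  have "(\<integral>\<^sup>+x. ennreal (indicator D x * w x) \<partial>M) < ennreal e" if D: "D \<in> sets M" "measure M D < d" for D
  proof -
    have "(\<integral>\<^sup>+x. ennreal (indicator D x * w x) \<partial>M)
        \<le> (\<integral>\<^sup>+x. ennreal (real n) * indicator D x + ennreal (tail n x) \<partial>M)"
      by (intro nn_integral_mono) (auto simp: tail_def indicator_def min_def w(2) simp flip: ennreal_plus)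
    also have "\<dots> = ennreal (real n * measure M D) + (\<integral>\<^sup>+x. ennreal (tail n x) \<partial>M)"
      using D(1) by (subst nn_integral_add) (auto simp: tail_def nn_integral_cmult_indicator emeasure_eq_measure ennreal_mult)
    also have "\<dots> < ennreal (e / 2 + e / 2)"
    proof (rule add_mono_ennreal[OF _ n])
      have "real n * measure M D \<le> real n * d"
        using D(2) by (intro mult_left_mono) auto
      also have "\<dots> < e / 2"
        using \<open>0 < e\<close> by (simp add: d_def field_simps)
      finally show "ennreal (real n * measure M D) < ennreal (e / 2)"
        using \<open>0 < e\<close> by (intro ennreal_lessI) auto
    qed
    finally show ?thesis
      by simp
  qed
  moreover have "0 < d"
    using \<open>0 < e\<close> by (simp add: d_def)
  ultimately show ?thesis
    by blast
qed

lemma exists_nat_less_le_le_Suc: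
  fixes t :: real
  assumes "0 \<le> t" "t \<le> real N" "0 < N"
  shows "\<exists>j<N. real j \<le> t \<and> t \<le> real j + 1"
proof (cases "t = real N")
  case True
  with assms(3) show ?thesis
    by (intro exI[of _ "N - 1"]) (auto simp: of_nat_diff)
next
  case False
  with assms have "nat \<lfloor>t\<rfloor> < N"
    by (simp add: nat_less_iff floor_less_iff)
  with assms show ?thesis
    by (intro exI[of _ "nat \<lfloor>t\<rfloor>"]) (auto simp: of_nat_floor)
qed

lemma (in nonatomic_finite_measure) exists_Xsp_near_indicator:
  fixes N :: nat
  assumes E: "E \<in> sets M" and "0 < N"
  shows "\<exists>g\<in>Xsp M. \<exists>D\<in>sets M. measure M D \<le> measure M (space M) / N \<and>
    (\<forall>x\<in>space M. \<bar>indicator E x - measure M E / measure M (space M) - g x\<bar> \<le> indicator D x + 1 / N)"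
proof (cases "measure M (space M) = 0")
  case True
  then have "measure M E = 0"
    using bounded_measure[of E] measure_nonneg[of M E] by linarith
  with E True show ?thesis
    using Xsp_zero by (intro bexI[of _ "\<lambda>_. 0"] bexI[of _ E]) auto
next
  case False
  define m where "m = measure M (space M)"
  define a where "a = measure M E"
  have "0 < m" "0 \<le> a" "a \<le> m"
    using False bounded_measure[of E] by (auto simp: m_def a_def less_le)
  then have "0 \<le> a * N / m" "a * N / m \<le> real N"
    by (auto simp: field_simps mult_right_mono)
  then obtain j where "j < N" "real j \<le> a * N / m" "a * N / m \<le> real j + 1"
    using exists_nat_less_le_le_Suc \<open>0 < N\<close> by blast
  then have j: "real j * (m / N) \<le> a" "a \<le> (real j + 1) * (m / N)"
    "real j / N \<le> a / m" "a / m \<le> (real j + 1) / N"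
    using \<open>0 < m\<close> \<open>0 < N\<close> by (auto simp: field_simps)
  obtain E' g where E': "E' \<in> sets M" "E' \<subseteq> E" "measure M E' = real j * (m / N)"
    and g: "g \<in> Xsp M" "\<And>x. x \<in> space M \<Longrightarrow> g x = indicator E' x - real j / N"
    using exists_Xsp_eq_indicator_minus_const[OF E \<open>j < N\<close>] j(1) by (auto simp: m_def a_def)
  have "measure M (E - E') = a - real j * (m / N)"
    using E E' by (simp add: a_def finite_measure_Diff)
  moreover have "(real j + 1) * (m / N) = real j * (m / N) + m / N"
    by (simp add: distrib_right add_divide_distrib)
  ultimately have "measure M (E - E') \<le> m / N"
    using j(2) by linarith
  moreover have "\<bar>indicator E x - a / m - g x\<bar> \<le> indicator (E - E') x + 1 / N" if "x \<in> space M" for x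
  proof -
    have "indicator E x - a / m - g x = indicator (E - E') x + (real j / N - a / m)"
      using g(2)[OF that] E'(2) by (auto simp: indicator_def)
    then show ?thesis
      using j(3,4) abs_triangle_ineq[of "indicator (E - E') x" "real j / N - a / m"]
      by (simp add: add_divide_distrib)
  qed
  ultimately show ?thesis
    using g(1) E E'(1) by (auto simp: m_def a_def)
qed

lemma (in nonatomic_finite_measure) Xsp_approximable_indicator:
  assumes w: "integrable M w" "\<And>x. 0 \<le> w x" and E: "E \<in> sets M"
  shows "Xsp_approximable M w (\<lambda>x. indicator E x - measure M E / measure M (space M))"
proof -
  have [measurable]: "w \<in> borel_measurable M"
    using w(1) by auto
  define u where "u x = indicator E x - measure M E / measure M (space M)" for x
  have "\<exists>g\<in>Xsp M. (\<integral>\<^sup>+x. ennreal (\<bar>u x - g x\<bar> * w x) \<partial>M) < ennreal e" if "e > 0" for e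
  proof -
    obtain d where "d > 0"
      and d: "\<And>D. D \<in> sets M \<Longrightarrow> measure M D < d \<Longrightarrow> (\<integral>\<^sup>+x. ennreal (indicator D x * w x) \<partial>M) < ennreal (e / 2)"
      using nn_integral_small_on_small_sets[OF w, of "e / 2"] \<open>e > 0\<close> by auto
    have "eventually (\<lambda>N. 0 < N \<and> measure M (space M) / N < d \<and> (\<integral>x. w x \<partial>M) / N < e / 2) sequentially"
      using \<open>d > 0\<close> \<open>e > 0\<close>
      by (intro eventually_conj eventually_gt_at_top order_tendstoD(2)[OF lim_const_over_n]) auto
    then obtain N :: nat where N: "0 < N" "measure M (space M) / N < d" "(\<integral>x. w x \<partial>M) / N < e / 2"
      unfolding eventually_sequentially by blast
    obtain g D where "g \<in> Xsp M" "D \<in> sets M" "measure M D < d"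
      and g: "\<And>x. x \<in> space M \<Longrightarrow> \<bar>u x - g x\<bar> \<le> \<bar>indicator D x\<bar> + \<bar>1 / real N\<bar>"
      using exists_Xsp_near_indicator[OF E \<open>0 < N\<close>] N(2) unfolding u_def by fastforce
    have [measurable]: "g \<in> borel_measurable M"
      using \<open>g \<in> Xsp M\<close> by (rule borel_measurable_Xsp)
    have "(\<integral>\<^sup>+x. ennreal (\<bar>u x - g x\<bar> * w x) \<partial>M)
        \<le> (\<integral>\<^sup>+x. ennreal (\<bar>indicator D x\<bar> * w x) \<partial>M) + (\<integral>\<^sup>+x. ennreal (\<bar>1 / real N\<bar> * w x) \<partial>M)"
      using g \<open>D \<in> sets M\<close> by (intro nn_integral_weighted_abs_le_add) auto
    also have "\<dots> < ennreal (e / 2 + e / 2)"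
    proof (rule add_mono_ennreal)
      show "(\<integral>\<^sup>+x. ennreal (\<bar>indicator D x\<bar> * w x) \<partial>M) < ennreal (e / 2)"
        using d[OF \<open>D \<in> sets M\<close> \<open>measure M D < d\<close>] by simp
      have "(\<integral>\<^sup>+x. ennreal (\<bar>1 / real N\<bar> * w x) \<partial>M) = ennreal ((\<integral>x. w x \<partial>M) / N)"
        using w by (subst nn_integral_eq_integral) auto
      then show "(\<integral>\<^sup>+x. ennreal (\<bar>1 / real N\<bar> * w x) \<partial>M) < ennreal (e / 2)"
        using N(3) \<open>e > 0\<close> by (simp add: ennreal_lessI)
    qed
    finally show ?thesis
      using \<open>g \<in> Xsp M\<close> by auto
  qed
  then show ?thesis
    using E by (simp add: Xsp_approximable_def u_def)
qed

lemma (in nonatomic_finite_measure) Xsp_approximable_simple: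
  assumes w: "integrable M w" "\<And>x. 0 \<le> w x" and s: "simple_function M s"
  shows "Xsp_approximable M w (\<lambda>x. s x - (\<integral>x. s x \<partial>M) / measure M (space M))"
proof -
  define V where "V = s ` space M"
  define level where "level y = s -` {y} \<inter> space M" for y
  have "finite V" and level: "\<And>y. level y \<in> sets M"
    using s by (simp_all add: V_def level_def simple_functionD)
  have s_eq: "s x = (\<Sum>y\<in>V. y * indicator (level y) x)" if "x \<in> space M" for x
  proof -
    have "s x = (\<Sum>y\<in>V. indicator (level y) x *\<^sub>R y)"
      using simple_function_indicator_representation_banach[OF s that] unfolding V_def level_def .
    then show ?thesis
      by (simp only: real_scaleR_def mult.commute)
  qed
  have "(\<integral>x. s x \<partial>M) = (\<integral>x. (\<Sum>y\<in>V. y * indicator (level y) x) \<partial>M)"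
    using s_eq by (intro Bochner_Integration.integral_cong) auto
  also have "\<dots> = (\<Sum>y\<in>V. (\<integral>x. y * indicator (level y) x \<partial>M))"
    using level by (intro Bochner_Integration.integral_sum integrable_mult_right) (auto simp: emeasure_finite less_top[symmetric])
  also have "\<dots> = (\<Sum>y\<in>V. y * measure M (level y))"
    using level by simp
  finally have integral_s: "(\<integral>x. s x \<partial>M) = (\<Sum>y\<in>V. y * measure M (level y))" .
  have "Xsp_approximable M w (\<lambda>x. \<Sum>y\<in>V. y * (indicator (level y) x - measure M (level y) / measure M (space M)))"
    using w(1) \<open>finite V\<close>
    by (intro Xsp_approximable_sum Xsp_approximable_cmult Xsp_approximable_indicator[OF w level]) auto
  then show ?thesis
  proof (rule Xsp_approximable_cong)
    fix x
    assume "x \<in> space M"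
    have "(\<Sum>y\<in>V. y * (indicator (level y) x - measure M (level y) / measure M (space M)))
        = (\<Sum>y\<in>V. y * indicator (level y) x) - (\<Sum>y\<in>V. y * measure M (level y)) / measure M (space M)"
      by (simp add: right_diff_distrib sum_subtractf sum_divide_distrib)
    then show "(\<Sum>y\<in>V. y * (indicator (level y) x - measure M (level y) / measure M (space M)))
        = s x - (\<integral>x. s x \<partial>M) / measure M (space M)"
      using s_eq[OF \<open>x \<in> space M\<close>] integral_s by simp
  qed
qed

lemma exists_simple_weighted_approx:
  fixes f w :: "'a \<Rightarrow> real"
  assumes w: "integrable M w" "\<And>x. 0 \<le> w x" and f: "integrable M f" "integrable M (\<lambda>x. f x * w x)"
  obtains s where "\<And>i. simple_function M (s i)"
    "(\<lambda>i. \<integral>\<^sup>+x. ennreal (\<bar>f x - s i x\<bar> * w x) \<partial>M) \<longlonglongrightarrow> 0"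
    "(\<lambda>i. \<integral>x. s i x \<partial>M) \<longlonglongrightarrow> (\<integral>x. f x \<partial>M)"
proof -
  have [measurable]: "w \<in> borel_measurable M" and f_meas[measurable]: "f \<in> borel_measurable M"
    using w(1) f(1) by auto
  obtain s where s: "\<And>i. simple_function M (s i)" "\<And>x. x \<in> space M \<Longrightarrow> (\<lambda>i. s i x) \<longlonglongrightarrow> f x"
    and s_dist: "\<And>i x. x \<in> space M \<Longrightarrow> dist (s i x) 0 \<le> 2 * dist (f x) 0"
    using borel_measurable_implies_sequence_metric[OF f_meas, of 0] by blast
  have s_bound: "\<bar>s i x\<bar> \<le> 2 * \<bar>f x\<bar>" if "x \<in> space M" for i x
    using s_dist[OF that] by (simp add: dist_real_def)
  have [measurable]: "s i \<in> borel_measurable M" for i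
    using s(1) by (rule borel_measurable_simple_function)
  have "(\<lambda>i. \<integral>\<^sup>+x. ennreal (\<bar>f x - s i x\<bar> * w x) \<partial>M) \<longlonglongrightarrow> (\<integral>\<^sup>+x. ennreal 0 \<partial>M)"
  proof (rule nn_integral_dominated_convergence[where w="\<lambda>x. ennreal (3 * \<bar>f x * w x\<bar>)"])
    show "(\<integral>\<^sup>+x. ennreal (3 * \<bar>f x * w x\<bar>) \<partial>M) < \<infinity>"
      using f(2) by (simp add: nn_integral_eq_integral)
    show "AE x in M. ennreal (\<bar>f x - s i x\<bar> * w x) \<le> ennreal (3 * \<bar>f x * w x\<bar>)" for i
    proof (intro AE_I2 ennreal_leI)
      fix x
      assume "x \<in> space M"
      then have "\<bar>f x - s i x\<bar> \<le> 3 * \<bar>f x\<bar>"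
        using abs_triangle_ineq4[of "f x" "s i x"] s_bound[of x i] by linarith
      then show "\<bar>f x - s i x\<bar> * w x \<le> 3 * \<bar>f x * w x\<bar>"
        using w(2)[of x] mult_right_mono by (fastforce simp: abs_mult)
    qed
    show "AE x in M. (\<lambda>i. ennreal (\<bar>f x - s i x\<bar> * w x)) \<longlonglongrightarrow> ennreal 0"
    proof (intro AE_I2 tendsto_ennrealI)
      fix x
      assume "x \<in> space M"
      then have "(\<lambda>i. \<bar>f x - s i x\<bar> * w x) \<longlonglongrightarrow> \<bar>f x - f x\<bar> * w x"
        by (intro tendsto_intros s(2))
      then show "(\<lambda>i. \<bar>f x - s i x\<bar> * w x) \<longlonglongrightarrow> 0"
        by simp
    qed
  qed simp_all
  moreover have "(\<lambda>i. \<integral>x. s i x \<partial>M) \<longlonglongrightarrow> (\<integral>x. f x \<partial>M)"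
    using s(2) s_bound f(1) by (intro integral_dominated_convergence[where w="\<lambda>x. 2 * \<bar>f x\<bar>"] AE_I2) auto
  ultimately show ?thesis
    using that[OF s(1)] by simp
qed

lemma (in nonatomic_finite_measure) Xsp_approximable_centered:
  assumes w: "integrable M w" "\<And>x. 0 \<le> w x" and f: "integrable M f" "integrable M (\<lambda>x. f x * w x)"
  shows "Xsp_approximable M w (\<lambda>x. f x - (\<integral>x. f x \<partial>M) / measure M (space M))"
proof -
  define m where "m = measure M (space M)"
  have [measurable]: "w \<in> borel_measurable M" "f \<in> borel_measurable M"
    using w(1) f(1) by auto
  obtain s where s: "\<And>i. simple_function M (s i)"
    and L1_conv: "(\<lambda>i. \<integral>\<^sup>+x. ennreal (\<bar>f x - s i x\<bar> * w x) \<partial>M) \<longlonglongrightarrow> 0"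
    and integral_conv: "(\<lambda>i. \<integral>x. s i x \<partial>M) \<longlonglongrightarrow> (\<integral>x. f x \<partial>M)"
    using exists_simple_weighted_approx[OF w f] by blast
  have [measurable]: "s i \<in> borel_measurable M" for i
    using s by (rule borel_measurable_simple_function)
  define c where "c i = ((\<integral>x. f x \<partial>M) - (\<integral>x. s i x \<partial>M)) / m" for i
  have "c \<longlonglongrightarrow> 0"
    unfolding c_def using tendsto_diff[OF tendsto_const[of "\<integral>x. f x \<partial>M"] integral_conv]
    by (intro tendsto_divide_zero) simp
  then have "(\<lambda>i. ennreal (\<bar>c i\<bar> * (\<integral>x. w x \<partial>M))) \<longlonglongrightarrow> ennreal (\<bar>0\<bar> * (\<integral>x. w x \<partial>M))"
    by (intro tendsto_intros)
  moreover have "(\<integral>\<^sup>+x. ennreal (\<bar>c i\<bar> * w x) \<partial>M) = ennreal (\<bar>c i\<bar> * (\<integral>x. w x \<partial>M))" for i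
    using w by (subst nn_integral_eq_integral) auto
  ultimately have "(\<lambda>i. (\<integral>\<^sup>+x. ennreal (\<bar>f x - s i x\<bar> * w x) \<partial>M) + (\<integral>\<^sup>+x. ennreal (\<bar>c i\<bar> * w x) \<partial>M))
      \<longlonglongrightarrow> 0 + 0"
    using L1_conv by (intro tendsto_add) simp_all
  show ?thesis
    unfolding m_def[symmetric]
  proof (rule Xsp_approximable_limit)
    fix e :: real
    assume "e > 0"
    obtain i where i: "(\<integral>\<^sup>+x. ennreal (\<bar>f x - s i x\<bar> * w x) \<partial>M) + (\<integral>\<^sup>+x. ennreal (\<bar>c i\<bar> * w x) \<partial>M) < ennreal e"
      using order_tendstoD(2)[OF \<open>_ \<longlonglongrightarrow> 0 + 0\<close>, of "ennreal e"] \<open>e > 0\<close>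
      unfolding eventually_sequentially by auto
    have "Xsp_approximable M w (\<lambda>x. s i x - (\<integral>x. s i x \<partial>M) / m)"
      unfolding m_def using w s by (rule Xsp_approximable_simple)
    moreover have "(\<integral>\<^sup>+x. ennreal (\<bar>f x - (\<integral>x. f x \<partial>M) / m - (s i x - (\<integral>x. s i x \<partial>M) / m)\<bar> * w x) \<partial>M)
        \<le> (\<integral>\<^sup>+x. ennreal (\<bar>f x - s i x\<bar> * w x) \<partial>M) + (\<integral>\<^sup>+x. ennreal (\<bar>c i\<bar> * w x) \<partial>M)"
      by (intro nn_integral_weighted_abs_le_add) (auto simp: c_def diff_divide_distrib abs_triangle_ineq4)
    ultimately show "\<exists>v. Xsp_approximable M w v \<and>
        (\<integral>\<^sup>+x. ennreal (\<bar>f x - (\<integral>x. f x \<partial>M) / m - v x\<bar> * w x) \<partial>M) < ennreal e"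
      using i by (auto intro: le_less_trans)
  qed auto
qed

section \<open>The two closures of X\<close>

lemma ennreal_abs_integral_le: "ennreal \<bar>\<integral>x. F x \<partial>M\<bar> \<le> (\<integral>\<^sup>+x. ennreal \<bar>F x\<bar> \<partial>M)"
  for F :: "'a \<Rightarrow> real"
  using integral_norm_bound_ennreal[of M F] by (cases "integrable M F") (auto simp: not_integrable_integral_eq)

lemma (in finite_measure) integrable_mult_Linfty:
  assumes "f \<in> Linfty M" "integrable M w"
  shows "integrable M (\<lambda>x. f x * w x)"
proof -
  obtain C where [measurable]: "f \<in> borel_measurable M" and C: "AE x in M. \<bar>f x\<bar> \<le> C"
    using assms(1) unfolding Linfty_def by blast
  have [measurable]: "w \<in> borel_measurable M"
    using assms(2) by auto
  show ?thesis
  proof (rule Bochner_Integration.integrable_bound[of M "\<lambda>x. C * w x"])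
    show "integrable M (\<lambda>x. C * w x)"
      using assms(2) by simp
    show "AE x in M. norm (f x * w x) \<le> norm (C * w x)"
      using C by eventually_elim (auto simp: abs_mult intro: mult_right_mono order_trans[OF _ abs_ge_self])
  qed measurable
qed

lemma (in finite_measure) integral_eq_0_if_near_Xsp:
  assumes "integrable M f" and near: "\<And>e. e > 0 \<Longrightarrow> \<exists>g\<in>Xsp M. \<bar>\<integral>x. f x - g x \<partial>M\<bar> < e"
  shows "(\<integral>x. f x \<partial>M) = 0"
proof (rule dense_eq0_I)
  fix e :: real
  assume "e > 0"
  then obtain g where "g \<in> Xsp M" "\<bar>\<integral>x. f x - g x \<partial>M\<bar> < e"
    using near by blast
  moreover have "(\<integral>x. f x - g x \<partial>M) = (\<integral>x. f x \<partial>M)"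
    using assms(1) integrable_Xsp[OF \<open>g \<in> Xsp M\<close>] integral_Xsp[OF \<open>g \<in> Xsp M\<close>] by simp
  ultimately show "\<bar>\<integral>x. f x \<partial>M\<bar> \<le> e"
    by simp
qed

context nonatomic_finite_measure
begin

lemma L1_closure_Xsp: "L1_closure M (Xsp M) = {f \<in> L1 M. (\<integral>x. f x \<partial>M) = 0}"
proof (intro set_eqI iffI)
  fix f
  assume f: "f \<in> L1_closure M (Xsp M)"
  have "\<exists>g\<in>Xsp M. \<bar>\<integral>x. f x - g x \<partial>M\<bar> < e" if "e > 0" for e
  proof -
    obtain g where "g \<in> Xsp M" "(\<integral>x. \<bar>f x - g x\<bar> \<partial>M) < e"
      using f \<open>e > 0\<close> unfolding L1_closure_def by blast
    moreover have "\<bar>\<integral>x. f x - g x \<partial>M\<bar> \<le> (\<integral>x. \<bar>f x - g x\<bar> \<partial>M)"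
      by (rule integral_abs_bound)
    ultimately show ?thesis
      by (meson le_less_trans)
  qed
  with f show "f \<in> {f \<in> L1 M. (\<integral>x. f x \<partial>M) = 0}"
    by (auto simp: L1_closure_def L1_def intro: integral_eq_0_if_near_Xsp)
next
  fix f
  assume "f \<in> {f \<in> L1 M. (\<integral>x. f x \<partial>M) = 0}"
  then have f: "integrable M f" "(\<integral>x. f x \<partial>M) = 0"
    by (auto simp: L1_def)
  have "Xsp_approximable M (\<lambda>_. 1) f"
    using Xsp_approximable_centered[of "\<lambda>_. 1" f] f by simp
  have "\<exists>g\<in>Xsp M. g \<in> L1 M \<and> (\<integral>x. \<bar>f x - g x\<bar> \<partial>M) < e" if "e > 0" for e
  proof -
    obtain g where g: "g \<in> Xsp M" "(\<integral>\<^sup>+x. ennreal \<bar>f x - g x\<bar> \<partial>M) < ennreal e"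
      using \<open>Xsp_approximable M (\<lambda>_. 1) f\<close> \<open>e > 0\<close> unfolding Xsp_approximable_def by auto
    have "integrable M (\<lambda>x. \<bar>f x - g x\<bar>)"
      using f(1) integrable_Xsp[OF g(1)] by auto
    then have "ennreal (\<integral>x. \<bar>f x - g x\<bar> \<partial>M) < ennreal e"
      using g(2) by (simp add: nn_integral_eq_integral)
    then show ?thesis
      using g(1) integrable_Xsp[OF g(1)] by (auto simp: L1_def ennreal_less_iff)
  qed
  with f show "f \<in> L1_closure M (Xsp M)"
    by (simp add: L1_closure_def L1_def)
qed

lemma exists_Xsp_near_weak_star:
  assumes f: "f \<in> Linfty M" "(\<integral>x. f x \<partial>M) = 0" and H: "finite H" "H \<subseteq> L1 M" and "e > 0"
  shows "\<exists>g\<in>Xsp M. \<forall>h\<in>H. \<bar>\<integral>x. (f x - g x) * h x \<partial>M\<bar> < e"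
proof -
  define w where "w x = (\<Sum>h\<in>H. \<bar>h x\<bar>)" for x
  have w: "integrable M w" "\<And>x. 0 \<le> w x"
    using H unfolding w_def L1_def by (auto intro!: sum_nonneg Bochner_Integration.integrable_sum)
  have "Xsp_approximable M w f"
    using Xsp_approximable_centered[OF w, of f] f integrable_mult_Linfty[OF f(1) w(1)]
      integrable_mult_Linfty[of f "\<lambda>_. 1"] by simp
  then obtain g where g: "g \<in> Xsp M" "(\<integral>\<^sup>+x. ennreal (\<bar>f x - g x\<bar> * w x) \<partial>M) < ennreal e"
    using \<open>e > 0\<close> unfolding Xsp_approximable_def by blast
  have "\<bar>\<integral>x. (f x - g x) * h x \<partial>M\<bar> < e" if "h \<in> H" for h
  proof -
    have "ennreal \<bar>\<integral>x. (f x - g x) * h x \<partial>M\<bar> \<le> (\<integral>\<^sup>+x. ennreal \<bar>(f x - g x) * h x\<bar> \<partial>M)"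
      by (rule ennreal_abs_integral_le)
    also have "\<dots> \<le> (\<integral>\<^sup>+x. ennreal (\<bar>f x - g x\<bar> * w x) \<partial>M)"
      using H(1) \<open>h \<in> H\<close> unfolding w_def
      by (intro nn_integral_mono ennreal_leI) (auto simp: abs_mult intro!: mult_left_mono member_le_sum)
    also have "\<dots> < ennreal e"
      by (rule g(2))
    finally show ?thesis
      by (simp add: ennreal_less_iff)
  qed
  with g(1) show ?thesis
    by blast
qed

lemma weak_star_closure_Xsp: "weak_star_closure M (Xsp M) = {f \<in> Linfty M. (\<integral>x. f x \<partial>M) = 0}"
proof (intro set_eqI iffI)
  fix f
  assume f: "f \<in> weak_star_closure M (Xsp M)"
  have "\<exists>g\<in>Xsp M. \<bar>\<integral>x. f x - g x \<partial>M\<bar> < e" if "e > 0" for e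
  proof -
    obtain g where "g \<in> Xsp M" "\<bar>\<integral>x. (f x - g x) * 1 \<partial>M\<bar> < e"
      using f \<open>e > 0\<close> unfolding weak_star_closure_def L1_def
      by (auto dest!: spec[of _ "{\<lambda>_. 1}"])
    then show ?thesis
      by auto
  qed
  with f show "f \<in> {f \<in> Linfty M. (\<integral>x. f x \<partial>M) = 0}"
    using integrable_mult_Linfty[of f "\<lambda>_. 1"]
    by (auto simp: weak_star_closure_def intro: integral_eq_0_if_near_Xsp)
next
  fix f
  assume f: "f \<in> {f \<in> Linfty M. (\<integral>x. f x \<partial>M) = 0}"
  have "\<exists>g\<in>Xsp M. g \<in> Linfty M \<and> (\<forall>h\<in>H. \<bar>\<integral>x. (f x - g x) * h x \<partial>M\<bar> < e)"
    if "finite H" "H \<subseteq> L1 M" "e > 0" for H e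
    using exists_Xsp_near_weak_star[of f H e] f that Xsp_subset_Linfty by blast
  with f show "f \<in> weak_star_closure M (Xsp M)"
    by (simp add: weak_star_closure_def)
qed

end

theorem lemma1p3:
  fixes M :: "'a measure"
  assumes "finite_measure M"
    and "\<And>A. \<not> atom M A"
  shows "L1_closure M (Xsp M) = {f \<in> L1 M. (\<integral>x. f x \<partial>M) = 0}
     \<and> weak_star_closure M (Xsp M) = {f \<in> Linfty M. (\<integral>x. f x \<partial>M) = 0}"
proof -
  interpret nonatomic_finite_measure M
    using assms by (simp add: nonatomic_finite_measure_def nonatomic_finite_measure_axioms_def)
  show ?thesis
    using L1_closure_Xsp weak_star_closure_Xsp by blast
qed

end
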